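(* Let $(x_n)$ be a level-block sequence in $JT$ which is equivalent to the unit vector basis of $\ell_2$. Then the closed linear span $[x_n]$ is complemented in $JT$.
   Context: Let $\mathcal T$ be the dyadic tree, with nodes enumerated by $\mathbb N$ so that the tree order $\preceq$ satisfies $n\preceq m\Rightarrow n\le m$; $|t|$ is the height of node $t$. A segment is a subset $s\subseteq\mathcal T$ totally ordered by $\preceq$ and convex. For $x\in c_0(\mathcal T)$, $\|x\|_{JT}=\sup\big(\sum_{j=1}^k(\sum_{t\in s_j}x(t))^2\big)^{1/2}$ over all finite families of pairwise disjoint finite segments; $JT=\{x\in c_0:\|x\|_{JT}<\infty\}$. For $0\ne x\in JT$, $\operatorname{supp}x=\{t:x(t)\ne0\}$, $l(x)=\min\{|t|:t\in\operatorname{supp}x\}$, $u(x)=\sup\{|t|:t\in\operatorname{supp}x\}$. A sequence $(x_k)$ of nonzero vectors is level-block if $u(x_k)<l(x_{k+1})$ for all $k$. *)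

theory Defs
  imports "HOL-Analysis.Analysis" "HOL-Library.Extended_Nat"
begin

text \<open>Dyadic tree on nat: root 0, children of n are 2n+1 and 2n+2.
  This enumeration satisfies  n \<preceq> m \<Longrightarrow> n \<le> m.\<close>

definition tparent :: "nat \<Rightarrow> nat" where
  "tparent m = (m - 1) div 2"

definition tle :: "nat \<Rightarrow> nat \<Rightarrow> bool" where
  "tle n m \<longleftrightarrow> (\<exists>k. (tparent ^^ k) m = n)"

fun height :: "nat \<Rightarrow> nat" where
  "height n = (if n = 0 then 0 else Suc (height ((n - 1) div 2)))"

definition segment :: "nat set \<Rightarrow> bool" where
  "segment S \<longleftrightarrow> (\<forall>a\<in>S. \<forall>b\<in>S. tle a b \<or> tle b a)
                  \<and> (\<forall>a\<in>S. \<forall>b\<in>S. \<forall>c. tle a c \<and> tle c b \<longrightarrow> c \<in> S)"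

definition admissible_family :: "nat set set \<Rightarrow> bool" where
  "admissible_family F \<longleftrightarrow> finite F \<and> (\<forall>s\<in>F. finite s \<and> segment s)
     \<and> (\<forall>s\<in>F. \<forall>s'\<in>F. s \<noteq> s' \<longrightarrow> s \<inter> s' = {})"

definition jt_sums :: "(nat \<Rightarrow> real) \<Rightarrow> real set" where
  "jt_sums x = {\<Sum>s\<in>F. (\<Sum>t\<in>s. x t)\<^sup>2 | F. admissible_family F}"

definition JT :: "(nat \<Rightarrow> real) set" where
  "JT = {x. x \<longlonglongrightarrow> 0 \<and> bdd_above (jt_sums x)}"

definition jt_norm :: "(nat \<Rightarrow> real) \<Rightarrow> real" where
  "jt_norm x = sqrt (Sup (jt_sums x))"

definition supp :: "(nat \<Rightarrow> real) \<Rightarrow> nat set" where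
  "supp x = {t. x t \<noteq> 0}"

definition lvl :: "(nat \<Rightarrow> real) \<Rightarrow> nat" where
  "lvl x = (LEAST h. \<exists>t\<in>supp x. height t = h)"

definition uvl :: "(nat \<Rightarrow> real) \<Rightarrow> enat" where
  "uvl x = (SUP t\<in>supp x. enat (height t))"

definition level_block :: "(nat \<Rightarrow> nat \<Rightarrow> real) \<Rightarrow> bool" where
  "level_block xs \<longleftrightarrow> (\<forall>k. supp (xs k) \<noteq> {}) \<and> (\<forall>k. uvl (xs k) < enat (lvl (xs (Suc k))))"

definition equiv_l2 :: "(nat \<Rightarrow> nat \<Rightarrow> real) \<Rightarrow> bool" where
  "equiv_l2 xs \<longleftrightarrow> (\<exists>c C. 0 < c \<and> 0 < C \<and> (\<forall>n (a::nat \<Rightarrow> real).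
      c * sqrt (\<Sum>k<n. (a k)\<^sup>2) \<le> jt_norm (\<lambda>t. \<Sum>k<n. a k * xs k t) \<and>
      jt_norm (\<lambda>t. \<Sum>k<n. a k * xs k t) \<le> C * sqrt (\<Sum>k<n. (a k)\<^sup>2)))"

definition lin_span :: "(nat \<Rightarrow> nat \<Rightarrow> real) \<Rightarrow> (nat \<Rightarrow> real) set" where
  "lin_span xs = {(\<lambda>t. \<Sum>k<n. a k * xs k t) | n a. True}"

definition closed_span :: "(nat \<Rightarrow> nat \<Rightarrow> real) \<Rightarrow> (nat \<Rightarrow> real) set" where
  "closed_span xs = {y \<in> JT. \<forall>e>0. \<exists>z\<in>lin_span xs. jt_norm (\<lambda>t. y t - z t) < e}"

definition complemented_in_JT :: "(nat \<Rightarrow> real) set \<Rightarrow> bool" where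
  "complemented_in_JT Y \<longleftrightarrow> (\<exists>P M.
      (\<forall>x\<in>JT. P x \<in> Y) \<and> (\<forall>y\<in>Y. P y = y)
    \<and> (\<forall>x\<in>JT. \<forall>y\<in>JT. \<forall>a b::real. P (\<lambda>t. a * x t + b * y t) = (\<lambda>t. a * P x t + b * P y t))
    \<and> (\<forall>x\<in>JT. jt_norm (P x) \<le> M * jt_norm x))"

end

theory Submission
  imports Defs
begin

text \<open>
  Let c |a|_2 <= |sum_k a_k x_k| <= C |a|_2, and write x(s) for the sum of x over a segment s.
  Being level-block, x_k lives on the band of levels [l(x_k), l(x_{k+1})), and distinct bands
  are disjoint. Choose an admissible family G_k of segments inside the k-th band with
  sum_{s in G_k} x_k(s)^2 > c^2/2 and put g_k(x) = sum_{s in G_k} x_k(s) x(s) / sum_{s in G_k} x_k(s)^2.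
  Then g_k(x_j) = delta_jk, and Cauchy-Schwarz gives g_k(x)^2 <= (2/c^2) sum_{s in G_k} x(s)^2.
  As the G_k occupy disjoint bands, their union is admissible, whence the Bessel inequality
  sum_k g_k(x)^2 <= (2/c^2) |x|^2. By the upper estimate the series P x = sum_k g_k(x) x_k then
  converges in JT to an element of [x_n] with |P x| <= (C sqrt 2 / c) |x|, and P is the
  identity on [x_n].
\<close>

declare height.simps [simp del]

lemma height_tparent: "m \<noteq> 0 \<Longrightarrow> height m = Suc (height (tparent m))"
  by (subst height.simps) (simp add: tparent_def)

lemma height_le_self: "height n \<le> n"
  by (induction n rule: height.induct) (subst height.simps; auto)

lemma tparent_le: "tparent m \<le> m"
  by (simp add: tparent_def)

lemma height_tparent_le: "height (tparent m) \<le> height m"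
  by (cases "m = 0") (simp_all add: height_tparent tparent_def)

lemma funpow_tparent_le: "(tparent ^^ k) m \<le> m \<and> height ((tparent ^^ k) m) \<le> height m"
proof (induction k)
  case 0 then show ?case by simp
next
  case (Suc k)
  then show ?case using tparent_le[of "(tparent ^^ k) m"] height_tparent_le[of "(tparent ^^ k) m"] by auto
qed

lemma tle_imp_le: "tle a b \<Longrightarrow> a \<le> b"
  unfolding tle_def using funpow_tparent_le by blast

lemma tle_imp_height_le: "tle a b \<Longrightarrow> height a \<le> height b"
  unfolding tle_def using funpow_tparent_le by blast

definition level_band :: "nat \<Rightarrow> nat \<Rightarrow> nat set" where
  "level_band a b = {t. a \<le> height t \<and> height t < b}"

lemma segment_Int_level_band:
  assumes "segment s" shows "segment (s \<inter> level_band a b)"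
proof -
  have "c \<in> level_band a b"
    if "u \<in> level_band a b" "v \<in> level_band a b" "tle u c" "tle c v" for u v c
    using that tle_imp_height_le[of u c] tle_imp_height_le[of c v]
    unfolding level_band_def by simp
  then show ?thesis
    using assms unfolding segment_def by blast
qed

lemma admissible_family_empty: "admissible_family {}"
  by (simp add: admissible_family_def)

lemma admissible_family_singleton: "admissible_family {{t}}"
  unfolding admissible_family_def segment_def
  using tle_imp_le by (auto simp: tle_def intro: exI[of _ 0] le_antisym)

section \<open>The James tree norm\<close>

definition seg_sum :: "nat set \<Rightarrow> (nat \<Rightarrow> real) \<Rightarrow> real" where
  "seg_sum s x = (\<Sum>t\<in>s. x t)"

definition jt_sum :: "nat set set \<Rightarrow> (nat \<Rightarrow> real) \<Rightarrow> real" where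
  "jt_sum F x = (\<Sum>s\<in>F. (seg_sum s x)\<^sup>2)"

abbreviation jt_bdd :: "(nat \<Rightarrow> real) \<Rightarrow> bool" where
  "jt_bdd x \<equiv> bdd_above (jt_sums x)"

lemma jt_sums_eq: "jt_sums x = {jt_sum F x | F. admissible_family F}"
  unfolding jt_sums_def jt_sum_def seg_sum_def ..

lemma jt_sum_nonneg: "0 \<le> jt_sum F x"
  unfolding jt_sum_def by (simp add: sum_nonneg)

lemma seg_sum_lincomb: "seg_sum s (\<lambda>t. a * x t + b * y t) = a * seg_sum s x + b * seg_sum s y"
  unfolding seg_sum_def by (simp add: sum.distrib sum_distrib_left)

lemma jt_sum_cong: "(\<And>s t. s \<in> F \<Longrightarrow> t \<in> s \<Longrightarrow> x t = y t) \<Longrightarrow> jt_sum F x = jt_sum F y"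
  unfolding jt_sum_def seg_sum_def by (intro sum.cong refl arg_cong[where f = "\<lambda>u. u\<^sup>2"]) auto

lemma JT_imp_jt_bdd: "x \<in> JT \<Longrightarrow> jt_bdd x"
  unfolding JT_def by simp

lemma jt_bddI: "(\<And>F. admissible_family F \<Longrightarrow> jt_sum F x \<le> B) \<Longrightarrow> jt_bdd x"
  unfolding jt_sums_eq bdd_above_def by blast

lemma jt_sum_le_Sup: "admissible_family F \<Longrightarrow> jt_bdd x \<Longrightarrow> jt_sum F x \<le> Sup (jt_sums x)"
  by (rule cSup_upper) (auto simp: jt_sums_eq)

lemma jt_norm_sq: "jt_bdd x \<Longrightarrow> (jt_norm x)\<^sup>2 = Sup (jt_sums x)"
  using jt_sum_le_Sup[OF admissible_family_empty] jt_sum_nonneg[of "{}"]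
  unfolding jt_norm_def by (metis order_trans real_sqrt_pow2)

lemma jt_norm_nonneg: "jt_bdd x \<Longrightarrow> 0 \<le> jt_norm x"
  using jt_norm_sq by (metis jt_norm_def real_sqrt_ge_zero zero_le_power2)

lemma jt_sum_le_jt_norm_sq: "admissible_family F \<Longrightarrow> jt_bdd x \<Longrightarrow> jt_sum F x \<le> (jt_norm x)\<^sup>2"
  by (simp add: jt_norm_sq jt_sum_le_Sup)

lemma jt_norm_leI:
  assumes "0 \<le> B" and "\<And>F. admissible_family F \<Longrightarrow> jt_sum F x \<le> B\<^sup>2"
  shows "jt_norm x \<le> B"
proof -
  have "Sup (jt_sums x) \<le> B\<^sup>2"
    using assms(2) by (intro cSup_least) (auto simp: jt_sums_eq intro: admissible_family_empty)
  then show ?thesis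
    unfolding jt_norm_def using assms(1) real_sqrt_le_mono by fastforce
qed

lemma abs_le_jt_norm:
  assumes "jt_bdd x" shows "\<bar>x t\<bar> \<le> jt_norm x"
proof (rule power2_le_imp_le)
  show "\<bar>x t\<bar>\<^sup>2 \<le> (jt_norm x)\<^sup>2"
    using jt_sum_le_jt_norm_sq[OF admissible_family_singleton assms, of t]
    by (simp add: jt_sum_def seg_sum_def)
  show "0 \<le> jt_norm x" using assms by (rule jt_norm_nonneg)
qed

lemma jt_bdd_lincomb:
  assumes "jt_bdd x" "jt_bdd y"
  shows "jt_bdd (\<lambda>t. a * x t + b * y t)"
proof (rule jt_bddI)
  fix F assume F: "admissible_family F"
  have "(a * p + b * q)\<^sup>2 \<le> 2 * a\<^sup>2 * p\<^sup>2 + 2 * b\<^sup>2 * q\<^sup>2" for p q :: real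
    using sum_squares_ge_zero[of "a * p - b * q" 0] by (simp add: power2_eq_square algebra_simps)
  then have "jt_sum F (\<lambda>t. a * x t + b * y t) \<le> 2 * a\<^sup>2 * jt_sum F x + 2 * b\<^sup>2 * jt_sum F y"
    unfolding jt_sum_def seg_sum_lincomb
    by (simp add: sum_distrib_left sum.distrib[symmetric] sum_mono)
  also have "\<dots> \<le> 2 * a\<^sup>2 * (jt_norm x)\<^sup>2 + 2 * b\<^sup>2 * (jt_norm y)\<^sup>2"
    using jt_sum_le_jt_norm_sq[OF F] assms by (intro add_mono mult_left_mono) auto
  finally show "jt_sum F (\<lambda>t. a * x t + b * y t) \<le> \<dots>" .
qed

lemma jt_bdd_sum:
  fixes n :: nat
  shows "(\<And>k. jt_bdd (y k)) \<Longrightarrow> jt_bdd (\<lambda>t. \<Sum>k<n. a k * y k t)"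
proof (induction n)
  case 0
  show ?case by (rule jt_bddI[of _ 0]) (simp add: jt_sum_def seg_sum_def)
next
  case (Suc n)
  then show ?case using jt_bdd_lincomb[of _ "y n" 1 "a n"] by simp
qed

lemma exists_jt_sum_gt:
  assumes "jt_bdd x" "r < (jt_norm x)\<^sup>2"
  obtains F where "admissible_family F" "r < jt_sum F x"
proof -
  have "jt_sums x \<noteq> {}" using admissible_family_empty by (auto simp: jt_sums_eq)
  then show ?thesis
    using assms that less_cSup_iff[of "jt_sums x" r] by (auto simp: jt_norm_sq jt_sums_eq)
qed

lemma admissible_family_restrict:
  assumes F: "admissible_family F" and B: "\<And>s. segment s \<Longrightarrow> segment (s \<inter> B)"
  shows "admissible_family ((\<lambda>s. s \<inter> B) ` F - {{}})"
  using assms unfolding admissible_family_def by (fastforce simp: disjoint_iff)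

lemma jt_sum_restrict:
  assumes F: "admissible_family F" and supp: "\<And>t. x t \<noteq> 0 \<Longrightarrow> t \<in> B"
  shows "jt_sum ((\<lambda>s. s \<inter> B) ` F - {{}}) x = jt_sum F x"
proof -
  have fin: "finite F" "\<And>s. s \<in> F \<Longrightarrow> finite s"
    using F by (auto simp: admissible_family_def)
  have "jt_sum ((\<lambda>s. s \<inter> B) ` F - {{}}) x = (\<Sum>s\<in>(\<lambda>s. s \<inter> B) ` F. (seg_sum s x)\<^sup>2)"
    unfolding jt_sum_def using fin by (intro sum.mono_neutral_left) (auto simp: seg_sum_def)
  also have "\<dots> = (\<Sum>s\<in>F. (seg_sum (s \<inter> B) x)\<^sup>2)"
  proof (rule trans[OF sum.reindex_nontrivial[OF fin(1)]])
    fix s s' assume "s \<in> F" "s' \<in> F" "s \<noteq> s'" "s \<inter> B = s' \<inter> B"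
    then have "s \<inter> B = {}" using F unfolding admissible_family_def by blast
    then show "(seg_sum (s \<inter> B) x)\<^sup>2 = 0" by (simp add: seg_sum_def)
  qed simp
  also have "\<dots> = jt_sum F x"
    unfolding jt_sum_def seg_sum_def using fin(2) supp
    by (intro sum.cong refl arg_cong[where f = "\<lambda>u. u\<^sup>2"] sum.mono_neutral_left) auto
  finally show ?thesis .
qed

lemma norming_family_within:
  assumes "jt_bdd x" "r < (jt_norm x)\<^sup>2"
    and "\<And>t. x t \<noteq> 0 \<Longrightarrow> t \<in> B" "\<And>s. segment s \<Longrightarrow> segment (s \<inter> B)"
  obtains G where "admissible_family G" "\<And>s. s \<in> G \<Longrightarrow> s \<noteq> {} \<and> s \<subseteq> B" "r < jt_sum G x"
proof -
  obtain F where "admissible_family F" "r < jt_sum F x"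
    using exists_jt_sum_gt[OF assms(1,2)] .
  with assms(3,4) show ?thesis
    using that[of "(\<lambda>s. s \<inter> B) ` F - {{}}"] admissible_family_restrict jt_sum_restrict by auto
qed

context
  fixes I :: "'i set" and G :: "'i \<Rightarrow> nat set set" and B :: "'i \<Rightarrow> nat set"
  assumes fin: "finite I"
    and adm: "\<And>i. i \<in> I \<Longrightarrow> admissible_family (G i)"
    and sub: "\<And>i s. i \<in> I \<Longrightarrow> s \<in> G i \<Longrightarrow> s \<noteq> {} \<and> s \<subseteq> B i"
    and disj: "disjoint_family_on B I"
begin

lemma admissible_family_UN: "admissible_family (\<Union>i\<in>I. G i)"
  unfolding admissible_family_def
proof (intro conjI ballI impI)
  show "finite (\<Union>i\<in>I. G i)" using fin adm by (auto simp: admissible_family_def)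
next
  fix s assume "s \<in> (\<Union>i\<in>I. G i)"
  then show "finite s" "segment s" using adm by (auto simp: admissible_family_def)
next
  fix s s' assume s: "s \<in> (\<Union>i\<in>I. G i)" and s': "s' \<in> (\<Union>i\<in>I. G i)" and "s \<noteq> s'"
  obtain i where i: "i \<in> I" "s \<in> G i" using s by (rule UN_E)
  obtain j where j: "j \<in> I" "s' \<in> G j" using s' by (rule UN_E)
  show "s \<inter> s' = {}"
  proof (cases "i = j")
    case True
    then show ?thesis using adm[OF i(1)] i j \<open>s \<noteq> s'\<close> by (auto simp: admissible_family_def)
  next
    case False
    then have "B i \<inter> B j = {}" using disj i j by (simp add: disjoint_family_on_def)
    then show ?thesis using sub[OF i] sub[OF j] by blast
  qed
qed

lemma jt_sum_UN: "jt_sum (\<Union>i\<in>I. G i) x = (\<Sum>i\<in>I. jt_sum (G i) x)"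
  unfolding jt_sum_def
proof (rule sum.UNION_disjoint[OF fin])
  show "\<forall>i\<in>I. finite (G i)" using adm by (simp add: admissible_family_def)
  show "\<forall>i\<in>I. \<forall>j\<in>I. i \<noteq> j \<longrightarrow> G i \<inter> G j = {}"
    using sub disj unfolding disjoint_family_on_def by blast
qed

end

section \<open>Norming functionals\<close>

definition norming_functional :: "nat set set \<Rightarrow> (nat \<Rightarrow> real) \<Rightarrow> (nat \<Rightarrow> real) \<Rightarrow> real" where
  "norming_functional G y x = (\<Sum>s\<in>G. seg_sum s y * seg_sum s x) / jt_sum G y"

lemma norming_functional_lincomb:
  "norming_functional G y (\<lambda>t. a * x t + b * z t)
     = a * norming_functional G y x + b * norming_functional G y z"
  unfolding norming_functional_def seg_sum_lincomb
  by (simp add: sum.distrib sum_distrib_left algebra_simps add_divide_distrib)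

lemma norming_functional_self: "jt_sum G y \<noteq> 0 \<Longrightarrow> norming_functional G y y = 1"
  by (simp add: norming_functional_def jt_sum_def power2_eq_square)

lemma norming_functional_eq_0:
  "(\<And>s t. s \<in> G \<Longrightarrow> t \<in> s \<Longrightarrow> x t = 0) \<Longrightarrow> norming_functional G y x = 0"
  by (simp add: norming_functional_def seg_sum_def)

lemma norming_functional_sq_le: "(norming_functional G y x)\<^sup>2 \<le> jt_sum G x / jt_sum G y"
proof (cases "jt_sum G y = 0")
  case False
  have "(\<Sum>s\<in>G. seg_sum s y * seg_sum s x)\<^sup>2 \<le> jt_sum G y * jt_sum G x"
    unfolding jt_sum_def by (rule Cauchy_Schwarz_ineq_sum)
  then have "(norming_functional G y x)\<^sup>2 \<le> jt_sum G y * jt_sum G x / (jt_sum G y)\<^sup>2"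
    unfolding norming_functional_def power_divide by (simp add: divide_right_mono)
  also have "\<dots> = jt_sum G x / jt_sum G y"
    using False by (simp add: power2_eq_square)
  finally show ?thesis .
qed (simp add: norming_functional_def)

definition block_band :: "(nat \<Rightarrow> nat \<Rightarrow> real) \<Rightarrow> nat \<Rightarrow> nat set" where
  "block_band xs k = level_band (lvl (xs k)) (lvl (xs (Suc k)))"

lemma level_block_support:
  assumes "level_block xs" "xs k t \<noteq> 0"
  shows "t \<in> block_band xs k"
proof -
  have t: "t \<in> supp (xs k)" using assms(2) by (simp add: supp_def)
  then have "lvl (xs k) \<le> height t"
    unfolding lvl_def by (auto intro: Least_le)
  moreover have "enat (height t) \<le> uvl (xs k)"
    using t unfolding uvl_def by (rule SUP_upper)
  then have "height t < lvl (xs (Suc k))"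
    using assms(1) unfolding level_block_def by (metis enat_ord_simps(2) le_less_trans)
  ultimately show ?thesis by (simp add: block_band_def level_band_def)
qed

lemma level_block_strict_mono_lvl:
  assumes "level_block xs" shows "strict_mono (\<lambda>k. lvl (xs k))"
proof (rule strict_mono_Suc_iff[THEN iffD2], rule allI)
  fix k
  obtain t where "xs k t \<noteq> 0" using assms by (auto simp: level_block_def supp_def)
  then show "lvl (xs k) < lvl (xs (Suc k))"
    using level_block_support[OF assms] by (fastforce simp: block_band_def level_band_def)
qed

lemma disjoint_family_block_band:
  assumes "level_block xs" shows "disjoint_family (block_band xs)"
proof -
  have "block_band xs j \<inter> block_band xs k = {}" if "j < k" for j k
  proof -
    have "lvl (xs (Suc j)) \<le> lvl (xs k)"
      using level_block_strict_mono_lvl[OF assms] that by (metis Suc_leI strict_mono_less_eq)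
    then show ?thesis by (auto simp: block_band_def level_band_def)
  qed
  then show ?thesis unfolding disjoint_family_on_def by (metis inf_commute linorder_neqE_nat)
qed

lemma level_block_vanishes_below:
  assumes "level_block xs" "t < k"
  shows "xs k t = 0"
proof (rule ccontr)
  assume "xs k t \<noteq> 0"
  then have "lvl (xs k) \<le> height t"
    using level_block_support[OF assms(1)] by (simp add: block_band_def level_band_def)
  moreover have "k \<le> lvl (xs k)"
    using level_block_strict_mono_lvl[OF assms(1)] by (rule strict_mono_imp_increasing)
  ultimately show False using height_le_self[of t] assms(2) by linarith
qed

section \<open>Projections given by $\ell_2$ coordinate functionals\<close>

lemma sum_lessThan_if_le:
  fixes f :: "nat \<Rightarrow> 'a::ab_group_add"
  shows "n \<le> N \<Longrightarrow> (\<Sum>k<N. if n \<le> k then f k else 0) = (\<Sum>k<N. f k) - (\<Sum>k<n. f k)"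
  by (induction N) (auto simp: le_Suc_eq)

lemma tendsto_zero_if_uniform_approx:
  fixes x :: "nat \<Rightarrow> real"
  assumes "\<And>n. f n \<longlonglongrightarrow> 0" "\<And>n t. \<bar>x t - f n t\<bar> \<le> e n" "e \<longlonglongrightarrow> 0"
  shows "x \<longlonglongrightarrow> 0"
proof (rule LIMSEQ_I)
  fix r :: real assume "0 < r"
  then obtain n where n: "e n < r / 2"
    using order_tendstoD(2)[OF assms(3), of "r / 2"] by (auto simp: eventually_sequentially)
  obtain t0 where t0: "\<And>t. t \<ge> t0 \<Longrightarrow> \<bar>f n t\<bar> < r / 2"
    using LIMSEQ_D[OF assms(1)[of n], of "r / 2"] \<open>0 < r\<close> by auto
  have "\<bar>x t\<bar> < r" if "t \<ge> t0" for t
    using assms(2)[of t n] n t0[OF that] by linarith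
  then show "\<exists>t0. \<forall>t\<ge>t0. norm (x t - 0) < r" by auto
qed

lemma lin_spanI: "(\<lambda>t. \<Sum>k<n. a k * xs k t) \<in> lin_span xs"
  unfolding lin_span_def by (rule CollectI, rule exI[of _ n], rule exI[of _ a]) simp

locale l2_coordinates =
  fixes xs :: "nat \<Rightarrow> nat \<Rightarrow> real" and g :: "nat \<Rightarrow> (nat \<Rightarrow> real) \<Rightarrow> real" and C K :: real
  assumes xs_JT: "\<And>k. xs k \<in> JT"
    and xs_vanishes_below: "\<And>k t. t < k \<Longrightarrow> xs k t = 0"
    and upper_l2: "\<And>n a. jt_norm (\<lambda>t. \<Sum>k<n. a k * xs k t) \<le> C * sqrt (\<Sum>k<n. (a k)\<^sup>2)"
    and g_lincomb: "\<And>k p q x y. g k (\<lambda>t. p * x t + q * y t) = p * g k x + q * g k y"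
    and g_xs: "\<And>j k. g k (xs j) = (if j = k then 1 else 0)"
    and bessel: "\<And>x n. jt_bdd x \<Longrightarrow> (\<Sum>k<n. (g k x)\<^sup>2) \<le> (K * jt_norm x)\<^sup>2"
begin

lemma jt_bdd_span: "jt_bdd (\<lambda>t. \<Sum>k<n. a k * xs k t)"
  by (rule jt_bdd_sum) (simp add: JT_imp_jt_bdd xs_JT)

lemma jt_sum_span_le:
  assumes "admissible_family F"
  shows "jt_sum F (\<lambda>t. \<Sum>k<n. a k * xs k t) \<le> C\<^sup>2 * (\<Sum>k<n. (a k)\<^sup>2)"
proof -
  have "jt_sum F (\<lambda>t. \<Sum>k<n. a k * xs k t) \<le> (jt_norm (\<lambda>t. \<Sum>k<n. a k * xs k t))\<^sup>2"
    using assms jt_bdd_span by (rule jt_sum_le_jt_norm_sq)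
  also have "\<dots> \<le> (C * sqrt (\<Sum>k<n. (a k)\<^sup>2))\<^sup>2"
    using upper_l2 jt_norm_nonneg[OF jt_bdd_span] by (rule power_mono)
  finally show ?thesis by (simp add: power_mult_distrib sum_nonneg)
qed

lemma g_span: "g k (\<lambda>t. \<Sum>j<n. a j * xs j t) = (if k < n then a k else 0)"
proof (induction n)
  case 0
  show ?case using g_lincomb[of k 0 "\<lambda>t. 0" 0 "\<lambda>t. 0"] by simp
next
  case (Suc n)
  have "g k (\<lambda>t. \<Sum>j<Suc n. a j * xs j t) = g k (\<lambda>t. 1 * (\<Sum>j<n. a j * xs j t) + a n * xs n t)"
    by simp
  also have "\<dots> = (if k < Suc n then a k else 0)"
    unfolding g_lincomb Suc g_xs by (auto simp: less_Suc_eq)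
  finally show ?case .
qed

lemma coeff_summable:
  assumes "jt_bdd x" shows "summable (\<lambda>k. (g k x)\<^sup>2)"
proof (rule bounded_imp_summable)
  show "(\<Sum>k\<le>n. (g k x)\<^sup>2) \<le> (K * jt_norm x)\<^sup>2" for n
    using bessel[OF assms, of "Suc n"] by (simp only: lessThan_Suc_atMost)
qed simp

definition coeff_tail :: "(nat \<Rightarrow> real) \<Rightarrow> nat \<Rightarrow> real" where
  "coeff_tail x n = (\<Sum>k. (g k x)\<^sup>2) - (\<Sum>k<n. (g k x)\<^sup>2)"

lemma coeff_tail_0_le: "jt_bdd x \<Longrightarrow> coeff_tail x 0 \<le> (K * jt_norm x)\<^sup>2"
  unfolding coeff_tail_def using suminf_le_const[OF coeff_summable] bessel by simp

lemma coeff_tail_nonneg: "jt_bdd x \<Longrightarrow> 0 \<le> coeff_tail x n"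
  unfolding coeff_tail_def using sum_le_suminf[OF coeff_summable, of x "{..<n}"] by simp

lemma tail_bound_tendsto_0:
  assumes "jt_bdd x" shows "(\<lambda>n. \<bar>C\<bar> * sqrt (coeff_tail x n)) \<longlonglongrightarrow> 0"
proof -
  have "coeff_tail x \<longlonglongrightarrow> (\<Sum>k. (g k x)\<^sup>2) - (\<Sum>k. (g k x)\<^sup>2)"
    unfolding coeff_tail_def by (intro tendsto_diff tendsto_const summable_LIMSEQ coeff_summable assms)
  then show ?thesis
    using tendsto_real_sqrt by (intro tendsto_mult_right_zero) fastforce
qed

text \<open>The series sum_k g_k(x) x_k at node t; its terms with k > t vanish.\<close>

definition expansion :: "(nat \<Rightarrow> real) \<Rightarrow> nat \<Rightarrow> real" where
  "expansion x t = (\<Sum>k\<le>t. g k x * xs k t)"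

lemma expansion_eq_sum: "t < N \<Longrightarrow> expansion x t = (\<Sum>k<N. g k x * xs k t)"
  unfolding expansion_def by (rule sum.mono_neutral_left) (auto simp: xs_vanishes_below)

lemma jt_sum_expansion_tail_le:
  assumes x: "jt_bdd x" and F: "admissible_family F"
  shows "jt_sum F (\<lambda>t. expansion x t - (\<Sum>k<n. g k x * xs k t)) \<le> C\<^sup>2 * coeff_tail x n"
proof -
  obtain N where N: "n \<le> N" "\<And>s t. s \<in> F \<Longrightarrow> t \<in> s \<Longrightarrow> t < N"
  proof -
    have "finite (\<Union>F)" using F by (auto simp: admissible_family_def)
    then obtain N0 where "\<Union>F \<subseteq> {..<N0}" using finite_nat_bounded by blast
    then show ?thesis using that[of "max n N0"] by fastforce
  qed
  define b where "b k = (if n \<le> k then g k x else 0)" for k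
  have "expansion x t - (\<Sum>k<n. g k x * xs k t) = (\<Sum>k<N. b k * xs k t)" if "t < N" for t
  proof -
    have "(\<Sum>k<N. b k * xs k t) = (\<Sum>k<N. if n \<le> k then g k x * xs k t else 0)"
      by (intro sum.cong) (auto simp: b_def)
    then show ?thesis
      using sum_lessThan_if_le[OF N(1), of "\<lambda>k. g k x * xs k t"] expansion_eq_sum[OF that]
      by simp
  qed
  then have "jt_sum F (\<lambda>t. expansion x t - (\<Sum>k<n. g k x * xs k t))
      = jt_sum F (\<lambda>t. \<Sum>k<N. b k * xs k t)"
    using N(2) by (intro jt_sum_cong) simp
  also have "\<dots> \<le> C\<^sup>2 * (\<Sum>k<N. (b k)\<^sup>2)"
    using F by (rule jt_sum_span_le)
  also have "(\<Sum>k<N. (b k)\<^sup>2) = (\<Sum>k<N. (g k x)\<^sup>2) - (\<Sum>k<n. (g k x)\<^sup>2)"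
    using N(1) by (simp add: b_def if_distrib[of "\<lambda>u. u\<^sup>2"] sum_lessThan_if_le cong: if_cong)
  also have "\<dots> \<le> coeff_tail x n"
    unfolding coeff_tail_def using sum_le_suminf[OF coeff_summable[OF x], of "{..<N}"] by simp
  finally show ?thesis by (simp add: mult_left_mono)
qed

lemma jt_bdd_expansion_tail:
  "jt_bdd x \<Longrightarrow> jt_bdd (\<lambda>t. expansion x t - (\<Sum>k<n. g k x * xs k t))"
  by (rule jt_bddI) (rule jt_sum_expansion_tail_le)

lemma jt_norm_expansion_tail_le:
  "jt_bdd x \<Longrightarrow> jt_norm (\<lambda>t. expansion x t - (\<Sum>k<n. g k x * xs k t)) \<le> \<bar>C\<bar> * sqrt (coeff_tail x n)"
  by (rule jt_norm_leI) (simp_all add: power_mult_distrib coeff_tail_nonneg jt_sum_expansion_tail_le)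

lemma jt_bdd_expansion: "jt_bdd x \<Longrightarrow> jt_bdd (expansion x)"
  using jt_bdd_expansion_tail[of x 0] by simp

lemma jt_norm_expansion_le:
  assumes x: "jt_bdd x" shows "jt_norm (expansion x) \<le> \<bar>C * K\<bar> * jt_norm x"
proof (rule jt_norm_leI)
  show "0 \<le> \<bar>C * K\<bar> * jt_norm x" using jt_norm_nonneg[OF x] by simp
  fix F assume "admissible_family F"
  then have "jt_sum F (expansion x) \<le> C\<^sup>2 * coeff_tail x 0"
    using jt_sum_expansion_tail_le[OF x, of F 0] by simp
  also have "\<dots> \<le> C\<^sup>2 * (K * jt_norm x)\<^sup>2"
    using coeff_tail_0_le[OF x] by (simp add: mult_left_mono)
  finally show "jt_sum F (expansion x) \<le> (\<bar>C * K\<bar> * jt_norm x)\<^sup>2"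
    by (simp add: power_mult_distrib)
qed

lemma expansion_tendsto_0:
  assumes x: "x \<in> JT" shows "expansion x \<longlonglongrightarrow> 0"
proof (rule tendsto_zero_if_uniform_approx)
  show "(\<lambda>t. \<Sum>k<n. g k x * xs k t) \<longlonglongrightarrow> 0" for n
    using xs_JT by (intro tendsto_null_sum tendsto_mult_right_zero) (simp add: JT_def)
  show "\<bar>expansion x t - (\<Sum>k<n. g k x * xs k t)\<bar> \<le> \<bar>C\<bar> * sqrt (coeff_tail x n)" for n t
    using x JT_imp_jt_bdd abs_le_jt_norm[OF jt_bdd_expansion_tail] jt_norm_expansion_tail_le
    by (meson order_trans)
  show "(\<lambda>n. \<bar>C\<bar> * sqrt (coeff_tail x n)) \<longlonglongrightarrow> 0"
    using x by (intro tail_bound_tendsto_0 JT_imp_jt_bdd)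
qed

lemma expansion_in_closed_span:
  assumes x: "x \<in> JT" shows "expansion x \<in> closed_span xs"
  unfolding closed_span_def
proof (intro CollectI conjI allI impI)
  have "jt_bdd x" using x by (rule JT_imp_jt_bdd)
  then show "expansion x \<in> JT"
    unfolding JT_def using expansion_tendsto_0[OF x] jt_bdd_expansion by simp
  fix e :: real assume "0 < e"
  obtain n where "\<bar>C\<bar> * sqrt (coeff_tail x n) < e"
    using order_tendstoD(2)[OF tail_bound_tendsto_0[OF \<open>jt_bdd x\<close>] \<open>0 < e\<close>]
    by (auto simp: eventually_sequentially)
  then have "jt_norm (\<lambda>t. expansion x t - (\<Sum>k<n. g k x * xs k t)) < e"
    using jt_norm_expansion_tail_le[OF \<open>jt_bdd x\<close>] by (meson le_less_trans)
  moreover have "(\<lambda>t. \<Sum>k<n. g k x * xs k t) \<in> lin_span xs"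
    by (rule lin_spanI)
  ultimately show "\<exists>z\<in>lin_span xs. jt_norm (\<lambda>t. expansion x t - z t) < e"
    by (intro bexI[of _ "\<lambda>t. \<Sum>k<n. g k x * xs k t"])
qed

lemma expansion_lincomb:
  "expansion (\<lambda>t. p * x t + q * y t) = (\<lambda>t. p * expansion x t + q * expansion y t)"
  unfolding expansion_def g_lincomb
  by (simp add: algebra_simps sum.distrib sum_distrib_left)

lemma expansion_span: "expansion (\<lambda>t. \<Sum>j<n. a j * xs j t) = (\<lambda>t. \<Sum>j<n. a j * xs j t)"
proof
  fix t
  have "expansion (\<lambda>t. \<Sum>j<n. a j * xs j t) t = (\<Sum>k<max (Suc t) n. (if k < n then a k else 0) * xs k t)"
    unfolding g_span[symmetric] by (rule expansion_eq_sum) simp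
  also have "\<dots> = (\<Sum>j<n. a j * xs j t)"
  proof -
    have "{..<max (Suc t) n} \<inter> {k. k < n} = {..<n}" by auto
    then show ?thesis by (simp add: if_distrib[of "\<lambda>u. u * _"] sum.If_cases cong: if_cong)
  qed
  finally show "expansion (\<lambda>t. \<Sum>j<n. a j * xs j t) t = (\<Sum>j<n. a j * xs j t)" .
qed

lemma expansion_closed_span:
  assumes y: "y \<in> closed_span xs" shows "expansion y = y"
proof
  fix t
  let ?M = "\<bar>C * K\<bar> + 1"
  have approx: "\<bar>expansion y t - y t\<bar> \<le> ?M * e" if "0 < e" for e
  proof -
    obtain z where "z \<in> lin_span xs" and yz: "jt_norm (\<lambda>t. y t - z t) < e"
      using y \<open>0 < e\<close> unfolding closed_span_def by blast
    then obtain n a where z: "z = (\<lambda>t. \<Sum>k<n. a k * xs k t)"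
      unfolding lin_span_def by blast
    define v where "v = (\<lambda>t. y t - z t)"
    have v: "jt_bdd v"
      using jt_bdd_lincomb[of y z 1 "-1"] y jt_bdd_span
      unfolding v_def z closed_span_def by (simp add: JT_imp_jt_bdd)
    have "expansion y = expansion (\<lambda>t. 1 * v t + 1 * z t)"
      by (simp add: v_def)
    also have "\<dots> = (\<lambda>t. expansion v t + z t)"
      unfolding expansion_lincomb z expansion_span by simp
    finally have "expansion y t - y t = expansion v t - v t"
      by (simp add: v_def)
    then have "\<bar>expansion y t - y t\<bar> \<le> \<bar>C * K\<bar> * jt_norm v + jt_norm v"
      using abs_le_jt_norm[OF jt_bdd_expansion[OF v], of t] jt_norm_expansion_le[OF v]
        abs_le_jt_norm[OF v, of t] by linarith
    also have "\<dots> \<le> ?M * e"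
      using yz mult_left_mono[of "jt_norm v" e "\<bar>C * K\<bar>"]
      unfolding v_def[symmetric] by (simp add: distrib_right)
    finally show ?thesis .
  qed
  have "\<bar>expansion y t - y t\<bar> \<le> 0"
  proof (rule field_le_epsilon)
    fix e :: real assume "0 < e"
    then show "\<bar>expansion y t - y t\<bar> \<le> 0 + e"
      using approx[of "e / ?M"] by (simp add: add_pos_nonneg)
  qed
  then show "expansion y t = y t" by simp
qed

theorem complemented_closed_span: "complemented_in_JT (closed_span xs)"
  unfolding complemented_in_JT_def
  by (intro exI[of _ expansion] exI[of _ "\<bar>C * K\<bar>"] conjI ballI allI)
    (simp_all add: expansion_in_closed_span expansion_closed_span expansion_lincomb
      jt_norm_expansion_le JT_imp_jt_bdd)

end


section \<open>Level-block sequences equivalent to the $\ell_2$ basis\<close>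

lemma level_block_norming_families:
  assumes "level_block xs" "\<And>k. jt_bdd (xs k)" "\<And>k. r < (jt_norm (xs k))\<^sup>2"
  obtains G where "\<And>k. admissible_family (G k)"
    "\<And>k s. s \<in> G k \<Longrightarrow> s \<noteq> {} \<and> s \<subseteq> block_band xs k" "\<And>k. r < jt_sum (G k) (xs k)"
proof -
  have "\<exists>G. admissible_family G \<and> (\<forall>s\<in>G. s \<noteq> {} \<and> s \<subseteq> block_band xs k) \<and> r < jt_sum G (xs k)"
    for k
    using norming_family_within[OF assms(2,3) level_block_support[OF assms(1)]]
    by (metis block_band_def segment_Int_level_band)
  then obtain G where "\<And>k. admissible_family (G k) \<and> (\<forall>s\<in>G k. s \<noteq> {} \<and> s \<subseteq> block_band xs k)
      \<and> r < jt_sum (G k) (xs k)"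
    by metis
  then show thesis using that by blast
qed

lemma level_block_bessel:
  assumes "level_block xs" "\<And>k. admissible_family (G k)"
    "\<And>k s. s \<in> G k \<Longrightarrow> s \<noteq> {} \<and> s \<subseteq> block_band xs k" "jt_bdd x"
  shows "(\<Sum>k<n. jt_sum (G k) x) \<le> (jt_norm x)\<^sup>2"
proof -
  have disj: "disjoint_family_on (block_band xs) {..<n}"
    using disjoint_family_block_band[OF assms(1)] by (rule disjoint_family_on_mono[rotated]) simp
  have "(\<Sum>k<n. jt_sum (G k) x) = jt_sum (\<Union>k<n. G k) x"
    using jt_sum_UN[OF _ assms(2,3) disj] by simp
  also have "\<dots> \<le> (jt_norm x)\<^sup>2"
    using admissible_family_UN[OF _ assms(2,3) disj] assms(4) by (simp add: jt_sum_le_jt_norm_sq)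
  finally show ?thesis .
qed

lemma level_block_norming_functional_xs:
  assumes lb: "level_block xs" and G: "\<And>s. s \<in> G \<Longrightarrow> s \<subseteq> block_band xs k"
    and "jt_sum G (xs k) \<noteq> 0"
  shows "norming_functional G (xs k) (xs j) = (if j = k then 1 else 0)"
proof (cases "j = k")
  case False
  have "xs j t = 0" if "t \<in> block_band xs k" for t
    using level_block_support[OF lb, of j t] disjoint_family_block_band[OF lb] False that
    unfolding disjoint_family_on_def by blast
  then have "norming_functional G (xs k) (xs j) = 0"
    using G by (intro norming_functional_eq_0) blast
  with False show ?thesis by simp
qed (simp add: norming_functional_self assms(3))

lemma level_block_bessel_norming_functionals:
  assumes lb: "level_block xs" and adm: "\<And>k. admissible_family (G k)"
    and band: "\<And>k s. s \<in> G k \<Longrightarrow> s \<noteq> {} \<and> s \<subseteq> block_band xs k"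
    and r: "0 < r" and large: "\<And>k. r < jt_sum (G k) (xs k)" and x: "jt_bdd x"
  shows "(\<Sum>k<n. (norming_functional (G k) (xs k) x)\<^sup>2) \<le> (jt_norm x)\<^sup>2 / r"
proof -
  have "(\<Sum>k<n. (norming_functional (G k) (xs k) x)\<^sup>2) \<le> (\<Sum>k<n. jt_sum (G k) x / r)"
  proof (intro sum_mono order_trans[OF norming_functional_sq_le])
    fix k
    have "0 < jt_sum (G k) (xs k)" using r large[of k] by linarith
    then show "jt_sum (G k) x / jt_sum (G k) (xs k) \<le> jt_sum (G k) x / r"
      by (rule divide_left_mono[OF less_imp_le[OF large] jt_sum_nonneg mult_pos_pos[OF _ r]])
  qed
  also have "\<dots> = (\<Sum>k<n. jt_sum (G k) x) / r"
    by (simp add: sum_divide_distrib)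
  also have "\<dots> \<le> (jt_norm x)\<^sup>2 / r"
    using level_block_bessel[of xs G, OF lb adm band x, of n] r by (simp add: divide_right_mono)
  finally show ?thesis .
qed

lemma level_block_l2_coordinates:
  assumes JT: "\<And>k. xs k \<in> JT" and lb: "level_block xs" and "equiv_l2 xs"
  obtains g C K where "l2_coordinates xs g C K"
proof -
  obtain c C where c: "0 < c"
    and lower: "\<And>n a. c * sqrt (\<Sum>k<n. (a k)\<^sup>2) \<le> jt_norm (\<lambda>t. \<Sum>k<n. a k * xs k t)"
    and upper: "\<And>n a. jt_norm (\<lambda>t. \<Sum>k<n. a k * xs k t) \<le> C * sqrt (\<Sum>k<n. (a k)\<^sup>2)"
    using \<open>equiv_l2 xs\<close> unfolding equiv_l2_def by blast
  have xs_bdd: "jt_bdd (xs k)" for k using JT by (rule JT_imp_jt_bdd)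
  have r: "0 < c\<^sup>2 / 2" using c by simp
  have "c\<^sup>2 / 2 < (jt_norm (xs k))\<^sup>2" for k
  proof -
    have "c \<le> jt_norm (xs k)"
      using lower[where n = "Suc k" and a = "\<lambda>j. if j = k then 1 else 0"]
      by (simp add: if_distrib cong: if_cong)
    then have "c\<^sup>2 \<le> (jt_norm (xs k))\<^sup>2"
      using c by (simp add: power_mono)
    with r show ?thesis by linarith
  qed
  then obtain G where adm: "\<And>k. admissible_family (G k)"
    and band: "\<And>k s. s \<in> G k \<Longrightarrow> s \<noteq> {} \<and> s \<subseteq> block_band xs k"
    and large: "\<And>k. c\<^sup>2 / 2 < jt_sum (G k) (xs k)"
    using level_block_norming_families[OF lb xs_bdd] by metis
  have "l2_coordinates xs (\<lambda>k. norming_functional (G k) (xs k)) C (1 / sqrt (c\<^sup>2 / 2))"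
  proof
    fix k j :: nat
    show "norming_functional (G k) (xs k) (xs j) = (if j = k then 1 else 0)"
      using r large[of k] band by (intro level_block_norming_functional_xs[OF lb]) force+
  next
    fix x n assume "jt_bdd x"
    then show "(\<Sum>k<n. (norming_functional (G k) (xs k) x)\<^sup>2) \<le> (1 / sqrt (c\<^sup>2 / 2) * jt_norm x)\<^sup>2"
      using level_block_bessel_norming_functionals[of xs G, OF lb adm band r large] r
      by (simp add: power_mult_distrib power_divide)
  qed (use JT lb upper norming_functional_lincomb level_block_vanishes_below in auto)
  then show thesis by (rule that)
qed

theorem mainTheorem9:
  fixes xs :: "nat \<Rightarrow> nat \<Rightarrow> real"
  assumes "\<forall>k. xs k \<in> JT"
    and "level_block xs"
    and "equiv_l2 xs"
  shows "complemented_in_JT (closed_span xs)"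
proof -
  obtain g C K where "l2_coordinates xs g C K"
    using level_block_l2_coordinates assms by blast
  then show ?thesis by (rule l2_coordinates.complemented_closed_span)
qed

end
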